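(* Let $(X,d)$ be a compact metric space and $f:X\to X$ continuous. If $(x,y)$ is a DC1-pair for $f$, then there exists $(z,w)\in\omega((x,y),f\times f)$ (so $(z,w)\in CR(f)^2$) such that $z\sim w$ and $(z,w)$ has property*.
   Context: A pair $(x,y)$ is a DC1-pair if $\limsup_{n}\frac1n|\{0\le i<n: d(f^i(x),f^i(y))<\delta\}|=1$ for every $\delta>0$ and $\limsup_{n}\frac1n|\{0\le i<n: d(f^i(x),f^i(y))>\delta_0\}|=1$ for some $\delta_0>0$. $\omega((x,y),f\times f)$ is the set of limit points of $(f^n(x),f^n(y))$ as $n\to\infty$. A $\delta$-chain of $f$ is a finite sequence $(x_i)_{i=0}^k$, $k\ge1$, with $d(f(x_i),x_{i+1})\le\delta$; a $\delta$-cycle is a $\delta$-chain with $x_0=x_k$. $CR(f)$ is the set of points $x$ such that for every $\delta>0$ there is a $\delta$-cycle starting and ending at $x$. For $x,y\in CR(f)$, $x\sim y$ iff for every $\delta>0$ there are integers $m>0$, $N>0$ such that for every $n\ge N$ there are $\delta$-chains $(x_i)_{i=0}^{mn},(y_i)_{i=0}^{mn}$ in $CR(f)$ with $x_0=y_{mn}=x$, $x_{mn}=y_0=y$. A pair $(x,y)\in CR(f)^2$ has property* if there is $r>0$ such that for every $\delta>0$ there are $\delta$-cycles $(x_i)_{i=0}^k,(y_i)_{i=0}^k$ of $f$ in $CR(f)$ of the same length with $x_0=x_k=x$, $y_0=y_k=y$ and $d(x_i,y_i)>r$ for all $0\le i\le k$. *)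

theory Defs
  imports "HOL-Analysis.Analysis" "HOL-Library.Liminf_Limsup"
begin

definition DC1_pair :: "('a::metric_space \<Rightarrow> 'a) \<Rightarrow> 'a \<Rightarrow> 'a \<Rightarrow> bool" where
  "DC1_pair f x y \<longleftrightarrow>
     (\<forall>\<delta>>0. limsup (\<lambda>n. ereal (real (card {i. i < n \<and> dist ((f ^^ i) x) ((f ^^ i) y) < \<delta>}) / real n)) = 1)
   \<and> (\<exists>\<delta>0>0. limsup (\<lambda>n. ereal (real (card {i. i < n \<and> dist ((f ^^ i) x) ((f ^^ i) y) > \<delta>0}) / real n)) = 1)"

definition omega_pair :: "('a::metric_space \<Rightarrow> 'a) \<Rightarrow> 'a \<Rightarrow> 'a \<Rightarrow> ('a \<times> 'a) set" where
  "omega_pair f x y = {p. \<exists>r::nat \<Rightarrow> nat. strict_mono r \<and>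
      ((\<lambda>n. ((f ^^ r n) x, (f ^^ r n) y)) \<longlonglongrightarrow> p)}"

definition chain_in :: "('a::metric_space \<Rightarrow> 'a) \<Rightarrow> 'a set \<Rightarrow> real \<Rightarrow> nat \<Rightarrow> (nat \<Rightarrow> 'a) \<Rightarrow> bool" where
  "chain_in f S \<delta> k c \<longleftrightarrow> 1 \<le> k \<and> (\<forall>i\<le>k. c i \<in> S) \<and>
      (\<forall>i<k. dist (f (c i)) (c (Suc i)) \<le> \<delta>)"

definition CR :: "('a::metric_space \<Rightarrow> 'a) \<Rightarrow> 'a set \<Rightarrow> 'a set" where
  "CR f X = {x \<in> X. \<forall>\<delta>>0. \<exists>k c. chain_in f X \<delta> k c \<and> c 0 = x \<and> c k = x}"

definition CR_equiv :: "('a::metric_space \<Rightarrow> 'a) \<Rightarrow> 'a set \<Rightarrow> 'a \<Rightarrow> 'a \<Rightarrow> bool" where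
  "CR_equiv f X x y \<longleftrightarrow> x \<in> CR f X \<and> y \<in> CR f X \<and>
     (\<forall>\<delta>>0. \<exists>m>0. \<exists>N>0. \<forall>n\<ge>N. \<exists>c d.
        chain_in f (CR f X) \<delta> (m * n) c \<and> chain_in f (CR f X) \<delta> (m * n) d \<and>
        c 0 = x \<and> c (m * n) = y \<and> d 0 = y \<and> d (m * n) = x)"

definition property_star :: "('a::metric_space \<Rightarrow> 'a) \<Rightarrow> 'a set \<Rightarrow> 'a \<Rightarrow> 'a \<Rightarrow> bool" where
  "property_star f X x y \<longleftrightarrow> x \<in> CR f X \<and> y \<in> CR f X \<and>
     (\<exists>r>0. \<forall>\<delta>>0. \<exists>k c d.
        chain_in f (CR f X) \<delta> k c \<and> chain_in f (CR f X) \<delta> k d \<and>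
        c 0 = x \<and> c k = x \<and> d 0 = y \<and> d k = y \<and> (\<forall>i\<le>k. dist (c i) (d i) > r))"

end

theory Submission
  imports Defs
begin

text \<open>
  By compactness the orbit of the pair \<open>(x, y)\<close> under \<open>f \<times> f\<close> accumulates at a diagonal
  point \<open>(p, p)\<close>, because the two orbits are frequently arbitrarily close.  Because they are
  also \<open>\<delta>\<^sub>0\<close>-apart along arbitrarily long runs of times, it accumulates at a point \<open>(q\<^sub>1, q\<^sub>2)\<close>
  whose whole forward orbit, and hence whose \<open>\<omega>\<close>-limit set, stays \<open>\<delta>\<^sub>0\<close>-apart.  Take \<open>(z, w)\<close>
  in \<open>\<omega>(q\<^sub>1, q\<^sub>2) \<subseteq> \<omega>(x, y)\<close>.  Every \<open>\<omega>\<close>-limit set is internally chain transitive, and chains of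
  \<open>f \<times> f\<close> project to pairs of chains of \<open>f\<close> of equal length.  Chains in \<open>\<omega>(q\<^sub>1, q\<^sub>2)\<close> from
  \<open>(z, w)\<close> back to itself give property*; chains in \<open>\<omega>(x, y)\<close> from \<open>(z, w)\<close> to \<open>(p, p)\<close> and back
  take \<open>z\<close> and \<open>w\<close> to the common point \<open>p\<close> and back in equal times, which gives \<open>z \<sim> w\<close>.
\<close>

lemma funpow_map_prod:
  fixes f :: "'a \<Rightarrow> 'a" and g :: "'b \<Rightarrow> 'b"
  shows "(map_prod f g ^^ n) (x, y) = ((f ^^ n) x, (g ^^ n) y)"
  by (induction n) auto

lemma funpow_in_invariant_set:
  fixes g :: "'a \<Rightarrow> 'a"
  shows "g ` X \<subseteq> X \<Longrightarrow> x \<in> X \<Longrightarrow> (g ^^ n) x \<in> X"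
  by (induction n) auto

lemma continuous_on_funpow:
  fixes g :: "'a::topological_space \<Rightarrow> 'a"
  assumes "continuous_on X g" "g ` X \<subseteq> X"
  shows "continuous_on X (g ^^ n)"
proof (induction n)
  case (Suc n)
  have "continuous_on X (g \<circ> (g ^^ n))"
    by (rule continuous_on_compose[OF Suc continuous_on_subset[OF assms(1)]])
       (use funpow_in_invariant_set[OF assms(2)] in auto)
  then show ?case by simp
qed simp

lemma funpow_limit_mem_closed:
  fixes g :: "'a::topological_space \<Rightarrow> 'a"
  assumes "closed X" "continuous_on X g" "g ` X \<subseteq> X" "p \<in> X"
    and "(\<lambda>i. (g ^^ s i) p) \<longlonglongrightarrow> q" "closed D" "\<And>i. i \<ge> n \<Longrightarrow> (g ^^ (n + s i)) p \<in> D"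
  shows "(g ^^ n) q \<in> D"
proof -
  have orbit: "\<forall>\<^sub>F i in sequentially. (g ^^ s i) p \<in> X"
    using funpow_in_invariant_set[OF assms(3,4)] by simp
  from Lim_in_closed_set[OF assms(1) orbit sequentially_bot assms(5)] have "q \<in> X" .
  from continuous_on_tendsto_compose[OF continuous_on_funpow[OF assms(2,3)] assms(5) this orbit]
  have lim: "(\<lambda>i. (g ^^ n) ((g ^^ s i) p)) \<longlonglongrightarrow> (g ^^ n) q" .
  have "\<forall>\<^sub>F i in sequentially. (g ^^ n) ((g ^^ s i) p) \<in> D"
    using assms(7) by (intro eventually_sequentiallyI[of n]) (simp add: funpow_add)
  from Lim_in_closed_set[OF assms(6) this sequentially_bot lim] show ?thesis .
qed

lemma strict_mono_choice:
  fixes Q :: "nat \<Rightarrow> nat \<Rightarrow> bool"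
  assumes "\<And>k N. \<exists>n\<ge>N. Q k n"
  obtains t where "strict_mono t" "\<And>k. Q k (t k)"
proof -
  have "\<exists>t. \<forall>k. Q k (t k) \<and> t k < t (Suc k)"
    by (rule dependent_nat_choice) (use assms Suc_le_eq in blast)+
  then show ?thesis using that strict_mono_Suc_iff by blast
qed

section \<open>Chains\<close>

lemma chain_in_mono: "chain_in f S \<delta> k c \<Longrightarrow> S \<subseteq> T \<Longrightarrow> chain_in f T \<delta> k c"
  unfolding chain_in_def by blast

lemma chain_in_map_prod:
  fixes f :: "'a::metric_space \<Rightarrow> 'a" and g :: "'b::metric_space \<Rightarrow> 'b"
  assumes "chain_in (map_prod f g) S \<delta> k c"
  shows "chain_in f (fst ` S) \<delta> k (fst \<circ> c)" "chain_in g (snd ` S) \<delta> k (snd \<circ> c)"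
proof -
  have "dist (fst (map_prod f g (c i))) (fst (c (Suc i))) \<le> \<delta>"
       "dist (snd (map_prod f g (c i))) (snd (c (Suc i))) \<le> \<delta>" if "i < k" for i
    using assms that order_trans[OF dist_fst_le] order_trans[OF dist_snd_le]
    unfolding chain_in_def by blast+
  then show "chain_in f (fst ` S) \<delta> k (fst \<circ> c)" "chain_in g (snd ` S) \<delta> k (snd \<circ> c)"
    using assms unfolding chain_in_def by auto
qed

lemma CR_map_prod_subset:
  fixes f :: "'a::metric_space \<Rightarrow> 'a" and g :: "'b::metric_space \<Rightarrow> 'b"
  shows "CR (map_prod f g) (X \<times> Y) \<subseteq> CR f X \<times> CR g Y"
proof clarify
  fix a b assume ab: "(a, b) \<in> CR (map_prod f g) (X \<times> Y)"
  have "(\<exists>k c. chain_in f X \<delta> k c \<and> c 0 = a \<and> c k = a) \<and>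
        (\<exists>k c. chain_in g Y \<delta> k c \<and> c 0 = b \<and> c k = b)" if \<delta>: "\<delta> > 0" for \<delta>
  proof -
    obtain k c where c: "chain_in (map_prod f g) (X \<times> Y) \<delta> k c" "c 0 = (a, b)" "c k = (a, b)"
      using ab \<delta> unfolding CR_def by blast
    have "chain_in f X \<delta> k (fst \<circ> c)"
      by (rule chain_in_mono[OF chain_in_map_prod(1)[OF c(1)]]) auto
    moreover have "chain_in g Y \<delta> k (snd \<circ> c)"
      by (rule chain_in_mono[OF chain_in_map_prod(2)[OF c(1)]]) auto
    ultimately show ?thesis using c(2,3) by force
  qed
  then show "a \<in> CR f X \<and> b \<in> CR g Y" using ab unfolding CR_def by auto
qed

definition chain_from_to :: "('a::metric_space \<Rightarrow> 'a) \<Rightarrow> 'a set \<Rightarrow> real \<Rightarrow> nat \<Rightarrow> 'a \<Rightarrow> 'a \<Rightarrow> bool" where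
  "chain_from_to f S \<delta> k a b \<longleftrightarrow> (\<exists>c. chain_in f S \<delta> k c \<and> c 0 = a \<and> c k = b)"

lemma chain_from_to_pos: "chain_from_to f S \<delta> k a b \<Longrightarrow> 0 < k"
  unfolding chain_from_to_def chain_in_def by auto

lemma chain_from_to_trans:
  assumes "chain_from_to f S \<delta> k a b" "chain_from_to f S \<delta> l b c"
  shows "chain_from_to f S \<delta> (k + l) a c"
proof -
  obtain u where u: "chain_in f S \<delta> k u" "u 0 = a" "u k = b"
    using assms(1) unfolding chain_from_to_def by blast
  obtain v where v: "chain_in f S \<delta> l v" "v 0 = b" "v l = c"
    using assms(2) unfolding chain_from_to_def by blast
  define w where "w i = (if i \<le> k then u i else v (i - k))" for i
  have "chain_in f S \<delta> (k + l) w"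
    unfolding chain_in_def
  proof (intro conjI allI impI)
    show "1 \<le> k + l" using u(1) unfolding chain_in_def by simp
    fix i
    show "w i \<in> S" if "i \<le> k + l" using u(1) v(1) that unfolding chain_in_def w_def by auto
    show "dist (f (w i)) (w (Suc i)) \<le> \<delta>" if "i < k + l"
    proof (cases "i < k")
      case True
      then show ?thesis using u(1) unfolding chain_in_def w_def by auto
    next
      case False
      then have "Suc i - k = Suc (i - k)" "i - k < l" using that by auto
      then show ?thesis using u v False unfolding chain_in_def w_def by (cases "i = k") auto
    qed
  qed
  moreover have "w 0 = a" "w (k + l) = c" using u v unfolding w_def by auto
  ultimately show ?thesis unfolding chain_from_to_def by blast
qed

lemma chain_from_to_loops:
  assumes "chain_from_to f S \<delta> m a a" "chain_from_to f S \<delta> m a b" "n \<ge> 1"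
  shows "chain_from_to f S \<delta> (m * n) a b"
  using assms(3)
proof (induction n rule: nat_induct_at_least)
  case (Suc n)
  then show ?case using chain_from_to_trans[OF assms(1) Suc.IH] by (simp add: add.commute)
qed (use assms(2) in simp)

lemma CR_equiv_if_common_point:
  assumes "x \<in> CR f X" "y \<in> CR f X"
    and "\<And>\<delta>. \<delta> > 0 \<Longrightarrow> \<exists>p k l.
           chain_from_to f (CR f X) \<delta> k x p \<and> chain_from_to f (CR f X) \<delta> k y p \<and>
           chain_from_to f (CR f X) \<delta> l p x \<and> chain_from_to f (CR f X) \<delta> l p y"
  shows "CR_equiv f X x y"
  unfolding CR_equiv_def
proof (intro conjI assms(1,2) allI impI)
  \<comment> \<open>Through \<open>p\<close>, both \<open>x \<leadsto> y\<close> and \<open>x \<leadsto> x\<close> take \<open>k + l\<close> steps, so padding with loops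
     \<open>x \<leadsto> x\<close> yields chains \<open>x \<leadsto> y\<close> of every length \<open>(k + l) * n\<close>.\<close>
  fix \<delta> :: real assume "\<delta> > 0"
  then obtain p k l where xp: "chain_from_to f (CR f X) \<delta> k x p"
    and yp: "chain_from_to f (CR f X) \<delta> k y p"
    and px: "chain_from_to f (CR f X) \<delta> l p x" and py: "chain_from_to f (CR f X) \<delta> l p y"
    using assms(3) by blast
  have "k + l > 0" using chain_from_to_pos[OF xp] by simp
  moreover have "\<exists>c d.
      chain_in f (CR f X) \<delta> ((k + l) * n) c \<and> chain_in f (CR f X) \<delta> ((k + l) * n) d \<and>
      c 0 = x \<and> c ((k + l) * n) = y \<and> d 0 = y \<and> d ((k + l) * n) = x" if "n \<ge> 1" for n
    using chain_from_to_loops[OF chain_from_to_trans[OF xp px] chain_from_to_trans[OF xp py] that]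
      chain_from_to_loops[OF chain_from_to_trans[OF yp py] chain_from_to_trans[OF yp px] that]
    unfolding chain_from_to_def by blast
  ultimately show "\<exists>m>0. \<exists>N>0. \<forall>n\<ge>N. \<exists>c d.
      chain_in f (CR f X) \<delta> (m * n) c \<and> chain_in f (CR f X) \<delta> (m * n) d \<and>
      c 0 = x \<and> c (m * n) = y \<and> d 0 = y \<and> d (m * n) = x"
    by (intro exI[of _ "k + l"] conjI exI[of _ "1::nat"]) auto
qed

section \<open>Omega-limit sets\<close>

definition omega_limit :: "('a::topological_space \<Rightarrow> 'a) \<Rightarrow> 'a \<Rightarrow> 'a set" where
  "omega_limit g p = {q. \<exists>r. strict_mono r \<and> (\<lambda>n. (g ^^ r n) p) \<longlonglongrightarrow> q}"

lemma omega_limit_iff: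
  fixes g :: "'a::metric_space \<Rightarrow> 'a"
  shows "q \<in> omega_limit g p \<longleftrightarrow> (\<forall>e>0. \<forall>N. \<exists>n\<ge>N. dist ((g ^^ n) p) q < e)"
proof
  assume "q \<in> omega_limit g p"
  then obtain r where r: "strict_mono r" "(\<lambda>n. (g ^^ r n) p) \<longlonglongrightarrow> q"
    unfolding omega_limit_def by blast
  show "\<forall>e>0. \<forall>N. \<exists>n\<ge>N. dist ((g ^^ n) p) q < e"
  proof (intro allI impI)
    fix e :: real and N assume "e > 0"
    then obtain M where "\<forall>n\<ge>M. dist ((g ^^ r n) p) q < e"
      using metric_LIMSEQ_D[OF r(2)] by blast
    then show "\<exists>n\<ge>N. dist ((g ^^ n) p) q < e"
      using seq_suble[OF r(1), of "max M N"] by (intro exI[of _ "r (max M N)"]) auto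
  qed
next
  assume "\<forall>e>0. \<forall>N. \<exists>n\<ge>N. dist ((g ^^ n) p) q < e"
  then have "\<exists>n\<ge>N. dist ((g ^^ n) p) q < inverse (real (Suc k))" for k N
    by simp
  then obtain r where r: "strict_mono r" "\<And>k. dist ((g ^^ r k) p) q < inverse (real (Suc k))"
    using strict_mono_choice[of "\<lambda>k n. dist ((g ^^ n) p) q < inverse (real (Suc k))"] by blast
  have "(\<lambda>k. dist ((g ^^ r k) p) q) \<longlonglongrightarrow> 0"
    by (rule Lim_null_comparison[OF always_eventually LIMSEQ_inverse_real_of_nat])
       (use r(2) in \<open>auto intro: less_imp_le simp del: of_nat_Suc\<close>)
  then show "q \<in> omega_limit g p"
    unfolding omega_limit_def using r(1) tendsto_dist_iff by blast
qed

lemma closed_omega_limit: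
  fixes g :: "'a::metric_space \<Rightarrow> 'a"
  shows "closed (omega_limit g p)"
proof -
  have "a \<in> omega_limit g p" if a: "a \<in> closure (omega_limit g p)" for a
    unfolding omega_limit_iff
  proof (intro allI impI)
    fix e :: real and N assume "e > 0"
    then obtain q where q: "q \<in> omega_limit g p" "dist q a < e/2"
      using a unfolding closure_approachable by (meson half_gt_zero)
    then obtain n where n: "n \<ge> N" "dist ((g ^^ n) p) q < e/2"
      using \<open>e > 0\<close> unfolding omega_limit_iff by (meson half_gt_zero)
    show "\<exists>n\<ge>N. dist ((g ^^ n) p) a < e"
      using n q dist_triangle[of "(g ^^ n) p" a q] by (intro exI[of _ n]) auto
  qed
  then show ?thesis using closure_subset_eq by blast
qed

lemma omega_limit_subset:
  fixes g :: "'a::first_countable_topology \<Rightarrow> 'a"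
  assumes "closed D" "\<And>n. (g ^^ n) p \<in> D"
  shows "omega_limit g p \<subseteq> D"
proof
  fix q assume "q \<in> omega_limit g p"
  then obtain r where "(\<lambda>n. (g ^^ r n) p) \<longlonglongrightarrow> q"
    unfolding omega_limit_def by blast
  then show "q \<in> D" by (rule closed_sequentially[OF assms(1) assms(2)])
qed

lemma omega_limit_subset_invariant_set:
  fixes g :: "'a::first_countable_topology \<Rightarrow> 'a"
  shows "closed X \<Longrightarrow> g ` X \<subseteq> X \<Longrightarrow> p \<in> X \<Longrightarrow> omega_limit g p \<subseteq> X"
  by (rule omega_limit_subset) (auto intro: funpow_in_invariant_set)

lemma omega_limit_invariant:
  fixes g :: "'a::metric_space \<Rightarrow> 'a"
  assumes "closed X" "continuous_on X g" "g ` X \<subseteq> X" "p \<in> X" "q \<in> omega_limit g p"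
  shows "g q \<in> omega_limit g p"
proof -
  obtain r where r: "strict_mono r" "(\<lambda>n. (g ^^ r n) p) \<longlonglongrightarrow> q"
    using assms(5) unfolding omega_limit_def by blast
  have "q \<in> X" using assms omega_limit_subset_invariant_set by blast
  then have "(\<lambda>n. g ((g ^^ r n) p)) \<longlonglongrightarrow> g q"
    by (intro continuous_on_tendsto_compose[OF assms(2) r(2)] always_eventually allI
        funpow_in_invariant_set[OF assms(3,4)])
  moreover have "strict_mono (Suc \<circ> r)" using r(1) by (simp add: strict_mono_def)
  ultimately show ?thesis
    unfolding omega_limit_def by (intro CollectI exI[of _ "Suc \<circ> r"]) simp
qed

lemma omega_limit_of_omega_limit_point:
  fixes g :: "'a::metric_space \<Rightarrow> 'a"
  assumes "closed X" "continuous_on X g" "g ` X \<subseteq> X" "p \<in> X" "q \<in> omega_limit g p"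
  shows "omega_limit g q \<subseteq> omega_limit g p"
proof (rule omega_limit_subset[OF closed_omega_limit])
  show "(g ^^ n) q \<in> omega_limit g p" for n
    by (induction n) (use assms omega_limit_invariant in auto)
qed

lemma omega_limit_subseq:
  fixes g :: "'a::metric_space \<Rightarrow> 'a" and t :: "nat \<Rightarrow> nat"
  assumes "compact X" "g ` X \<subseteq> X" "p \<in> X" "strict_mono t"
  obtains r q where "strict_mono r" "(\<lambda>j. (g ^^ t (r j)) p) \<longlonglongrightarrow> q" "q \<in> omega_limit g p"
proof -
  obtain q r where "strict_mono r" "((\<lambda>k. (g ^^ t k) p) \<circ> r) \<longlonglongrightarrow> q"
    using seq_compactE[OF compact_imp_seq_compact[OF assms(1)], of "\<lambda>k. (g ^^ t k) p"]
      funpow_in_invariant_set[OF assms(2,3)] by blast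
  moreover have "strict_mono (t \<circ> r)" using assms(4) calculation(1) by (rule strict_mono_o)
  ultimately show ?thesis using that unfolding omega_limit_def by (auto simp: o_def)
qed

lemma omega_limit_nonempty:
  fixes g :: "'a::metric_space \<Rightarrow> 'a"
  assumes "compact X" "g ` X \<subseteq> X" "p \<in> X"
  shows "omega_limit g p \<noteq> {}"
  using omega_limit_subseq[OF assms strict_mono_id] by blast

lemma orbit_eventually_near_omega_limit:
  fixes g :: "'a::metric_space \<Rightarrow> 'a"
  assumes "compact X" "g ` X \<subseteq> X" "p \<in> X" "e > 0"
  obtains N where "\<And>n. n \<ge> N \<Longrightarrow> \<exists>q\<in>omega_limit g p. dist ((g ^^ n) p) q < e"
proof -
  define far where "far n \<longleftrightarrow> (\<forall>q\<in>omega_limit g p. e \<le> dist ((g ^^ n) p) q)" for n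
  have "\<exists>N. \<forall>n\<ge>N. \<not> far n"
  proof (rule ccontr)
    assume "\<nexists>N. \<forall>n\<ge>N. \<not> far n"
    then have "\<exists>n\<ge>N. far n" for N by blast
    then obtain t :: "nat \<Rightarrow> nat" where t: "strict_mono t" "\<And>k. far (t k)"
      using strict_mono_choice[of "\<lambda>_. far"] by blast
    obtain r q where q: "(\<lambda>j. (g ^^ t (r j)) p) \<longlonglongrightarrow> q" "q \<in> omega_limit g p"
      using omega_limit_subseq[OF assms(1-3) t(1)] by blast
    then obtain j where "dist ((g ^^ t (r j)) p) q < e"
      using metric_LIMSEQ_D[OF q(1) assms(4)] by blast
    then show False using t(2) q(2) unfolding far_def by (meson not_le)
  qed
  then show ?thesis using that unfolding far_def by (meson not_le)
qed

lemma chain_in_shadowing_orbit: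
  fixes g :: "'a::metric_space \<Rightarrow> 'a"
  assumes "g ` X \<subseteq> X" "p \<in> X" "S \<subseteq> X" "k \<ge> 1" "e \<le> \<delta>/2"
    and "\<And>s t. s \<in> X \<Longrightarrow> t \<in> X \<Longrightarrow> dist s t < e \<Longrightarrow> dist (g s) (g t) < \<delta>/2"
    and "\<And>i. i \<le> k \<Longrightarrow> c i \<in> S \<and> dist ((g ^^ (n + i)) p) (c i) < e"
  shows "chain_in g S \<delta> k c"
proof -
  let ?u = "\<lambda>i. (g ^^ (n + i)) p"
  have "dist (g (c i)) (c (Suc i)) \<le> \<delta>" if "i < k" for i
  proof -
    have "c i \<in> X" "dist (c i) (?u i) < e"
      using assms(3) assms(7)[of i] that by (auto simp: dist_commute)
    then have "dist (g (c i)) (?u (Suc i)) < \<delta>/2"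
      using assms(6)[of "c i" "?u i"] funpow_in_invariant_set[OF assms(1,2)] by simp
    moreover have "dist (?u (Suc i)) (c (Suc i)) < \<delta>/2" using assms(5) assms(7)[of "Suc i"] that by auto
    ultimately show ?thesis using dist_triangle[of "g (c i)" "c (Suc i)" "?u (Suc i)"] by linarith
  qed
  then show ?thesis using assms(4,7) unfolding chain_in_def by auto
qed

lemma omega_limit_chain_transitive:
  fixes g :: "'a::metric_space \<Rightarrow> 'a"
  assumes "compact X" "continuous_on X g" "g ` X \<subseteq> X" "p \<in> X"
    and "a \<in> omega_limit g p" "b \<in> omega_limit g p" "\<delta> > 0"
  obtains k c where "chain_in g (omega_limit g p) \<delta> k c" "c 0 = a" "c k = b"
proof -
  let ?\<Omega> = "omega_limit g p" and ?u = "\<lambda>n. (g ^^ n) p"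
  obtain e0 where e0: "e0 > 0"
    "\<And>s t. s \<in> X \<Longrightarrow> t \<in> X \<Longrightarrow> dist s t < e0 \<Longrightarrow> dist (g s) (g t) < \<delta>/2"
    using compact_uniformly_continuous[OF assms(2,1)] assms(7)
    unfolding uniformly_continuous_on_def by (metis half_gt_zero)
  define e where "e = min e0 (\<delta>/2)"
  have e: "e > 0" "e \<le> \<delta>/2" using e0(1) assms(7) unfolding e_def by auto
  obtain N where N: "\<And>n. n \<ge> N \<Longrightarrow> \<exists>q\<in>?\<Omega>. dist (?u n) q < e"
    using orbit_eventually_near_omega_limit[OF assms(1,3,4) e(1)] by blast
  obtain n1 where n1: "n1 \<ge> N" "dist (?u n1) a < e"
    using assms(5) e(1) unfolding omega_limit_iff by blast
  obtain n2 where n2: "n2 \<ge> Suc n1" "dist (?u n2) b < e"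
    using assms(6) e(1) unfolding omega_limit_iff by blast
  \<comment> \<open>Replace the orbit segment from time \<open>n1\<close> to \<open>n2\<close> by nearby points of the \<open>\<omega>\<close>-limit set.\<close>
  define k where "k = n2 - n1"
  define c where "c i = (if i = 0 then a else if i = k then b
                        else SOME q. q \<in> ?\<Omega> \<and> dist (?u (n1 + i)) q < e)" for i
  have c: "c i \<in> ?\<Omega> \<and> dist (?u (n1 + i)) (c i) < e" if "i \<le> k" for i
  proof -
    have "\<exists>q. q \<in> ?\<Omega> \<and> dist (?u (n1 + i)) q < e" using N[of "n1 + i"] n1(1) by auto
    from someI_ex[OF this] show ?thesis
      using n1 n2 assms(5,6) that unfolding c_def k_def by auto
  qed
  have "chain_in g ?\<Omega> \<delta> k c"
  proof (rule chain_in_shadowing_orbit[OF assms(3,4) _ _ e(2) _ c])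
    show "?\<Omega> \<subseteq> X"
      using omega_limit_subset_invariant_set[OF compact_imp_closed[OF assms(1)] assms(3,4)] .
    show "1 \<le> k" using n2 unfolding k_def by simp
    show "dist (g s) (g t) < \<delta>/2" if "s \<in> X" "t \<in> X" "dist s t < e" for s t
      using e0(2)[OF that(1,2)] that(3) e_def by simp
  qed
  moreover have "c 0 = a" "c k = b" using n2 unfolding k_def c_def by auto
  ultimately show ?thesis by (rule that)
qed

lemma omega_limit_subset_CR:
  fixes g :: "'a::metric_space \<Rightarrow> 'a"
  assumes "compact X" "continuous_on X g" "g ` X \<subseteq> X" "p \<in> X"
  shows "omega_limit g p \<subseteq> CR g X"
proof
  fix a assume a: "a \<in> omega_limit g p"
  have \<Omega>X: "omega_limit g p \<subseteq> X"
    using omega_limit_subset_invariant_set[OF compact_imp_closed[OF assms(1)] assms(3,4)] .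
  have "\<exists>k c. chain_in g X \<delta> k c \<and> c 0 = a \<and> c k = a" if "\<delta> > 0" for \<delta>
    using omega_limit_chain_transitive[OF assms a a that] chain_in_mono[OF _ \<Omega>X] by metis
  then show "a \<in> CR g X" unfolding CR_def using a \<Omega>X by blast
qed

lemma omega_pair_eq_omega_limit:
  fixes f :: "'a::metric_space \<Rightarrow> 'a"
  shows "omega_pair f x y = omega_limit (map_prod f f) (x, y)"
  by (simp add: omega_pair_def omega_limit_def funpow_map_prod)

lemma compact_map_prod_system:
  fixes f :: "'a::metric_space \<Rightarrow> 'a"
  assumes "compact X" "continuous_on X f" "f ` X \<subseteq> X"
  shows "compact (X \<times> X)" "continuous_on (X \<times> X) (map_prod f f)"
    and "map_prod f f ` (X \<times> X) \<subseteq> X \<times> X"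
proof -
  show "compact (X \<times> X)" using assms(1) by (intro compact_Times)
  show "map_prod f f ` (X \<times> X) \<subseteq> X \<times> X" using assms(3) by auto
  have "continuous_on (X \<times> X) (\<lambda>q. (f (fst q), f (snd q)))"
    by (intro continuous_on_Pair continuous_on_compose2[OF assms(2)] continuous_on_fst continuous_on_snd continuous_on_id) auto
  then show "continuous_on (X \<times> X) (map_prod f f)" by (simp add: map_prod_def case_prod_beta)
qed

lemma omega_pair_subset_CR:
  fixes f :: "'a::metric_space \<Rightarrow> 'a"
  assumes "compact X" "continuous_on X f" "f ` X \<subseteq> X" "x \<in> X" "y \<in> X"
  shows "omega_pair f x y \<subseteq> CR f X \<times> CR f X"
proof -
  have "omega_pair f x y \<subseteq> CR (map_prod f f) (X \<times> X)"
    unfolding omega_pair_eq_omega_limit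
    by (rule omega_limit_subset_CR[OF compact_map_prod_system[OF assms(1-3)]]) (use assms(4,5) in auto)
  then show ?thesis using CR_map_prod_subset by blast
qed

lemma omega_pair_chain:
  fixes f :: "'a::metric_space \<Rightarrow> 'a"
  assumes "compact X" "continuous_on X f" "f ` X \<subseteq> X" "x \<in> X" "y \<in> X"
    and "(a, b) \<in> omega_pair f x y" "(a', b') \<in> omega_pair f x y" "\<delta> > 0"
  obtains k c d where "chain_in f (CR f X) \<delta> k c" "chain_in f (CR f X) \<delta> k d"
    "c 0 = a" "d 0 = b" "c k = a'" "d k = b'" "\<And>i. i \<le> k \<Longrightarrow> (c i, d i) \<in> omega_pair f x y"
proof -
  have xy: "(x, y) \<in> X \<times> X" using assms(4,5) by simp
  obtain k C where C: "chain_in (map_prod f f) (omega_limit (map_prod f f) (x, y)) \<delta> k C"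
    "C 0 = (a, b)" "C k = (a', b')"
    by (rule omega_limit_chain_transitive[OF compact_map_prod_system[OF assms(1-3)] xy
          assms(6,7)[unfolded omega_pair_eq_omega_limit] assms(8)])
  then have C': "chain_in (map_prod f f) (omega_pair f x y) \<delta> k C"
    by (simp add: omega_pair_eq_omega_limit)
  have "fst ` omega_pair f x y \<subseteq> CR f X" "snd ` omega_pair f x y \<subseteq> CR f X"
    using omega_pair_subset_CR[OF assms(1-5)] by auto
  then have "chain_in f (CR f X) \<delta> k (fst \<circ> C)" "chain_in f (CR f X) \<delta> k (snd \<circ> C)"
    using chain_in_mono[OF chain_in_map_prod(1)[OF C']] chain_in_mono[OF chain_in_map_prod(2)[OF C']]
    by blast+
  moreover have "((fst \<circ> C) i, (snd \<circ> C) i) \<in> omega_pair f x y" if "i \<le> k" for i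
    using C' that unfolding chain_in_def by simp
  ultimately show ?thesis
    using that[of k "fst \<circ> C" "snd \<circ> C"] C(2,3) by simp
qed

lemma omega_pair_nonempty:
  fixes f :: "'a::metric_space \<Rightarrow> 'a"
  assumes "compact X" "continuous_on X f" "f ` X \<subseteq> X" "x \<in> X" "y \<in> X"
  obtains z w where "(z, w) \<in> omega_pair f x y"
  using omega_limit_nonempty[OF compact_map_prod_system(1,3)[OF assms(1-3)], of "(x, y)"] assms(4,5)
  unfolding omega_pair_eq_omega_limit by fastforce

lemma omega_pair_subset_of_mem:
  fixes f :: "'a::metric_space \<Rightarrow> 'a"
  assumes "compact X" "continuous_on X f" "f ` X \<subseteq> X" "x \<in> X" "y \<in> X"
    and "(q1, q2) \<in> omega_pair f x y"
  shows "omega_pair f q1 q2 \<subseteq> omega_pair f x y"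
proof -
  note F = compact_map_prod_system[OF assms(1-3)]
  have "(x, y) \<in> X \<times> X" using assms(4,5) by simp
  from omega_limit_of_omega_limit_point[OF compact_imp_closed[OF F(1)] F(2,3) this] assms(6)
  show ?thesis unfolding omega_pair_eq_omega_limit by simp
qed

lemma CR_equiv_if_omega_pair_meets_diagonal:
  fixes f :: "'a::metric_space \<Rightarrow> 'a"
  assumes "compact X" "continuous_on X f" "f ` X \<subseteq> X" "x \<in> X" "y \<in> X"
    and "(z, w) \<in> omega_pair f x y" "(p, p) \<in> omega_pair f x y"
  shows "CR_equiv f X z w"
proof (rule CR_equiv_if_common_point)
  show "z \<in> CR f X" "w \<in> CR f X" using omega_pair_subset_CR[OF assms(1-5)] assms(6) by auto
  fix \<delta> :: real assume "\<delta> > 0"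
  obtain k c d where "chain_in f (CR f X) \<delta> k c" "chain_in f (CR f X) \<delta> k d"
      "c 0 = z" "d 0 = w" "c k = p" "d k = p"
    by (rule omega_pair_chain[OF assms(1-7) \<open>\<delta> > 0\<close>]) blast
  moreover obtain l c' d' where "chain_in f (CR f X) \<delta> l c'" "chain_in f (CR f X) \<delta> l d'"
      "c' 0 = p" "d' 0 = p" "c' l = z" "d' l = w"
    by (rule omega_pair_chain[OF assms(1-5,7,6) \<open>\<delta> > 0\<close>]) blast
  ultimately show "\<exists>p k l.
      chain_from_to f (CR f X) \<delta> k z p \<and> chain_from_to f (CR f X) \<delta> k w p \<and>
      chain_from_to f (CR f X) \<delta> l p z \<and> chain_from_to f (CR f X) \<delta> l p w"
    unfolding chain_from_to_def by blast
qed

lemma property_star_if_omega_pair_separated: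
  fixes f :: "'a::metric_space \<Rightarrow> 'a"
  assumes "compact X" "continuous_on X f" "f ` X \<subseteq> X" "x \<in> X" "y \<in> X"
    and "(z, w) \<in> omega_pair f x y" "r > 0"
    and "\<And>a b. (a, b) \<in> omega_pair f x y \<Longrightarrow> r \<le> dist a b"
  shows "property_star f X z w"
  unfolding property_star_def
proof (intro conjI exI[of _ "r/2"] allI impI)
  show "z \<in> CR f X" "w \<in> CR f X" using omega_pair_subset_CR[OF assms(1-5)] assms(6) by auto
  show "r/2 > 0" using assms(7) by simp
  fix \<delta> :: real assume "\<delta> > 0"
  obtain k c d where "chain_in f (CR f X) \<delta> k c" "chain_in f (CR f X) \<delta> k d"
      "c 0 = z" "d 0 = w" "c k = z" "d k = w" and on: "\<And>i. i \<le> k \<Longrightarrow> (c i, d i) \<in> omega_pair f x y"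
    by (rule omega_pair_chain[OF assms(1-6,6) \<open>\<delta> > 0\<close>]) blast
  moreover have "\<forall>i\<le>k. r/2 < dist (c i) (d i)"
    using on assms(7,8) by fastforce
  ultimately show "\<exists>k c d. chain_in f (CR f X) \<delta> k c \<and> chain_in f (CR f X) \<delta> k d \<and>
      c 0 = z \<and> c k = z \<and> d 0 = w \<and> d k = w \<and> (\<forall>i\<le>k. r/2 < dist (c i) (d i))"
    by blast
qed

section \<open>Sets of upper density one\<close>

lemma card_gaps_lower_bound:
  fixes P :: "nat \<Rightarrow> bool"
  assumes "\<And>s. s \<ge> N \<Longrightarrow> \<exists>j\<le>L. \<not> P (s + j)"
  shows "m \<le> card {i. i < N + (L + 1) * m \<and> \<not> P i}"
proof (induction m)
  case (Suc m)
  let ?A = "{i. i < N + (L + 1) * m \<and> \<not> P i}"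
  obtain j where j: "j \<le> L" "\<not> P (N + (L + 1) * m + j)"
    using assms[of "N + (L + 1) * m"] by auto
  have "insert (N + (L + 1) * m + j) ?A \<subseteq> {i. i < N + (L + 1) * Suc m \<and> \<not> P i}"
    using j by auto
  then have "card (insert (N + (L + 1) * m + j) ?A) \<le> card {i. i < N + (L + 1) * Suc m \<and> \<not> P i}"
    by (rule card_mono[rotated]) simp
  then show ?case using Suc.IH by simp
qed simp

lemma card_le_if_gaps:
  fixes P :: "nat \<Rightarrow> bool"
  assumes "\<And>s. s \<ge> N \<Longrightarrow> \<exists>j\<le>L. \<not> P (s + j)" "n > N"
  shows "real (card {i. i < n \<and> P i}) \<le> real n - (real n - real N - real L) / (real L + 1)"
proof -
  define m where "m = (n - N) div (L + 1)"
  have "(L + 1) * m + (n - N) mod (L + 1) = n - N"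
    unfolding m_def by (metis div_mult_mod_eq mult.commute)
  moreover have "(n - N) mod (L + 1) \<le> L" using mod_less_divisor[of "L + 1" "n - N"] by simp
  ultimately have m: "N + (L + 1) * m \<le> n" "n \<le> N + (L + 1) * m + L"
    using assms(2) by linarith+
  have "card {i. i < n \<and> P i} + card {i. i < n \<and> \<not> P i} = n"
  proof -
    have "{i. i < n \<and> P i} \<union> {i. i < n \<and> \<not> P i} = {..<n}" by auto
    then show ?thesis by (subst card_Un_disjoint[symmetric]) auto
  qed
  moreover have "m \<le> card {i. i < n \<and> \<not> P i}"
  proof -
    have "{i. i < N + (L + 1) * m \<and> \<not> P i} \<subseteq> {i. i < n \<and> \<not> P i}" using m(1) by auto
    then have "card {i. i < N + (L + 1) * m \<and> \<not> P i} \<le> card {i. i < n \<and> \<not> P i}"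
      by (rule card_mono[rotated]) simp
    then show ?thesis using card_gaps_lower_bound[of N L P m, OF assms(1)] by linarith
  qed
  ultimately have "real (card {i. i < n \<and> P i}) \<le> real n - real m" by linarith
  also have "\<dots> \<le> real n - (real n - real N - real L) / (real L + 1)"
  proof -
    have "real n \<le> real (N + (L + 1) * m + L)" using m(2) by (simp only: of_nat_le_iff)
    then show ?thesis by (simp add: field_simps)
  qed
  finally show ?thesis .
qed

lemma upper_density_lt_one_if_gaps:
  fixes P :: "nat \<Rightarrow> bool"
  assumes "\<And>s. s \<ge> N \<Longrightarrow> \<exists>j\<le>L. \<not> P (s + j)"
  shows "limsup (\<lambda>n. ereal (real (card {i. i < n \<and> P i}) / real n)) < 1"
proof -
  define \<beta> where "\<beta> = 1 - 1 / (real L + 1)"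
  define C where "C = (real N + real L) / (real L + 1)"
  define b where "b n = \<beta> + C / real n" for n
  have bound: "real (card {i. i < n \<and> P i}) / real n \<le> b n" if "n > N" for n
  proof -
    have n_pos: "real n > 0" using that by simp
    have "real (card {i. i < n \<and> P i}) \<le> real n - (real n - real N - real L) / (real L + 1)"
      by (rule card_le_if_gaps[OF assms that])
    also have "\<dots> = \<beta> * real n + C"
      unfolding \<beta>_def C_def by (simp add: diff_divide_distrib add_divide_distrib algebra_simps)
    also have "\<dots> = b n * real n"
      using n_pos unfolding b_def by (simp add: distrib_right)
    finally show ?thesis using n_pos by (simp add: pos_divide_le_eq)
  qed
  have b_lim: "(\<lambda>n. ereal (b n)) \<longlonglongrightarrow> ereal \<beta>"
    unfolding b_def using tendsto_add[OF tendsto_const lim_const_over_n, of \<beta> C]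
    by (intro tendsto_ereal) simp
  have "limsup (\<lambda>n. ereal (real (card {i. i < n \<and> P i}) / real n)) \<le> limsup (\<lambda>n. ereal (b n))"
    using bound by (intro Limsup_mono eventually_sequentiallyI[of "Suc N"]) simp
  also have "\<dots> = ereal \<beta>" by (rule lim_imp_Limsup[OF _ b_lim]) simp
  also have "\<dots> < 1" unfolding \<beta>_def by simp
  finally show ?thesis .
qed

lemma long_runs_if_upper_density_one:
  fixes P :: "nat \<Rightarrow> bool"
  assumes "limsup (\<lambda>n. ereal (real (card {i. i < n \<and> P i}) / real n)) = 1"
  shows "\<exists>s\<ge>N. \<forall>j\<le>L. P (s + j)"
proof (rule ccontr)
  assume "\<not> ?thesis"
  then have "limsup (\<lambda>n. ereal (real (card {i. i < n \<and> P i}) / real n)) < 1"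
    by (intro upper_density_lt_one_if_gaps[of N L]) auto
  with assms show False by simp
qed

section \<open>DC1 pairs\<close>

lemma DC1_pair_omega_pair_diagonal:
  fixes f :: "'a::metric_space \<Rightarrow> 'a"
  assumes "compact X" "continuous_on X f" "f ` X \<subseteq> X" "x \<in> X" "y \<in> X" "DC1_pair f x y"
  obtains p where "(p, p) \<in> omega_pair f x y"
proof -
  let ?d = "\<lambda>n. dist ((f ^^ n) x) ((f ^^ n) y)"
  have "\<exists>n\<ge>N. ?d n < inverse (real (Suc k))" for k N
  proof -
    have "limsup (\<lambda>n. ereal (real (card {i. i < n \<and> ?d i < inverse (real (Suc k))}) / real n)) = 1"
      using assms(6) unfolding DC1_pair_def by simp
    from long_runs_if_upper_density_one[OF this, of N 0] show ?thesis by auto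
  qed
  then obtain t :: "nat \<Rightarrow> nat" where t: "strict_mono t" "\<And>k. ?d (t k) < inverse (real (Suc k))"
    using strict_mono_choice[of "\<lambda>k n. ?d n < inverse (real (Suc k))"] by blast
  have xy: "(x, y) \<in> X \<times> X" using assms(4,5) by simp
  obtain r q where q: "strict_mono r" "(\<lambda>j. (map_prod f f ^^ t (r j)) (x, y)) \<longlonglongrightarrow> q"
      "q \<in> omega_pair f x y"
    unfolding omega_pair_eq_omega_limit
    by (rule omega_limit_subseq[OF compact_map_prod_system(1,3)[OF assms(1-3)] xy t(1)])
  have "(\<lambda>j. ?d (t (r j))) \<longlonglongrightarrow> dist (fst q) (snd q)"
    using tendsto_dist[OF tendsto_fst[OF q(2)] tendsto_snd[OF q(2)]] by (simp add: funpow_map_prod)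
  moreover have "?d (t (r j)) \<le> inverse (real (Suc j))" for j
  proof -
    have "inverse (real (Suc (r j))) \<le> inverse (real (Suc j))"
      by (rule le_imp_inverse_le) (use seq_suble[OF q(1), of j] in auto)
    then show ?thesis using t(2)[of "r j"] by linarith
  qed
  ultimately have "dist (fst q) (snd q) \<le> 0"
    by (intro LIMSEQ_le[OF _ LIMSEQ_inverse_real_of_nat]) auto
  then show ?thesis using that[of "fst q"] q(3) by (cases q) simp
qed

lemma DC1_pair_omega_pair_separated:
  fixes f :: "'a::metric_space \<Rightarrow> 'a"
  assumes "compact X" "continuous_on X f" "f ` X \<subseteq> X" "x \<in> X" "y \<in> X" "DC1_pair f x y"
  obtains q1 q2 r where "(q1, q2) \<in> omega_pair f x y" "r > 0"
    "\<And>a b. (a, b) \<in> omega_pair f q1 q2 \<Longrightarrow> r \<le> dist a b"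
proof -
  let ?F = "map_prod f f" and ?d = "\<lambda>n. dist ((f ^^ n) x) ((f ^^ n) y)"
  note F = compact_map_prod_system[OF assms(1-3)]
  obtain r where r: "r > 0" "limsup (\<lambda>n. ereal (real (card {i. i < n \<and> ?d i > r}) / real n)) = 1"
    using assms(6) unfolding DC1_pair_def by blast
  have "\<exists>s\<ge>N. \<forall>j\<le>k. r < ?d (s + j)" for k N
    using long_runs_if_upper_density_one[OF r(2)] by blast
  then obtain t :: "nat \<Rightarrow> nat" where t: "strict_mono t" "\<And>k j. j \<le> k \<Longrightarrow> r < ?d (t k + j)"
    using strict_mono_choice[of "\<lambda>k s. \<forall>j\<le>k. r < ?d (s + j)"] by blast
  have xy: "(x, y) \<in> X \<times> X" using assms(4,5) by simp
  obtain \<rho> q where q: "strict_mono \<rho>" "(\<lambda>i. (?F ^^ t (\<rho> i)) (x, y)) \<longlonglongrightarrow> q"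
      "q \<in> omega_limit ?F (x, y)"
    by (rule omega_limit_subseq[OF F(1,3) xy t(1)])
  \<comment> \<open>The pair orbit of the limit of the starts of ever longer separated runs stays \<open>r\<close>-apart.\<close>
  define D :: "('a \<times> 'a) set" where "D = {q. r \<le> dist (fst q) (snd q)}"
  have "closed D" unfolding D_def by (intro closed_Collect_le continuous_intros)
  have "(?F ^^ n) q \<in> D" for n
  proof (rule funpow_limit_mem_closed[OF compact_imp_closed[OF F(1)] F(2,3) xy q(2) \<open>closed D\<close>])
    fix i assume "i \<ge> n"
    then have "n \<le> \<rho> i" using seq_suble[OF q(1), of i] by linarith
    then have "r < ?d (n + t (\<rho> i))" using t(2) by (simp only: add.commute)
    then show "(?F ^^ (n + t (\<rho> i))) (x, y) \<in> D" unfolding D_def by (simp add: funpow_map_prod)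
  qed
  then have "omega_limit ?F q \<subseteq> D" by (rule omega_limit_subset[OF \<open>closed D\<close>])
  then have "r \<le> dist a b" if "(a, b) \<in> omega_limit ?F q" for a b
    using that unfolding D_def by auto
  then show ?thesis
    using that[of "fst q" "snd q" r] q(3) r(1) unfolding omega_pair_eq_omega_limit by simp
qed

theorem propositionA1:
  fixes f :: "'a::metric_space \<Rightarrow> 'a" and X :: "'a set" and x y :: 'a
  assumes "compact X" and "continuous_on X f" and "f ` X \<subseteq> X"
    and "x \<in> X" and "y \<in> X"
    and "DC1_pair f x y"
  shows "\<exists>z w. (z, w) \<in> omega_pair f x y \<and> z \<in> CR f X \<and> w \<in> CR f X
           \<and> CR_equiv f X z w \<and> property_star f X z w"
proof -
  obtain p where diagonal: "(p, p) \<in> omega_pair f x y"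
    by (rule DC1_pair_omega_pair_diagonal[OF assms])
  obtain q1 q2 r where q: "(q1, q2) \<in> omega_pair f x y" "r > 0"
    and separated: "\<And>a b. (a, b) \<in> omega_pair f q1 q2 \<Longrightarrow> r \<le> dist a b"
    by (rule DC1_pair_omega_pair_separated[OF assms]) blast
  have qX: "q1 \<in> X" "q2 \<in> X"
    using omega_pair_subset_CR[OF assms(1-5)] q(1) unfolding CR_def by auto
  obtain z w where zw: "(z, w) \<in> omega_pair f q1 q2"
    by (rule omega_pair_nonempty[OF assms(1-3) qX])
  then have zw': "(z, w) \<in> omega_pair f x y"
    using omega_pair_subset_of_mem[OF assms(1-5) q(1)] by blast
  show ?thesis
    using zw' omega_pair_subset_CR[OF assms(1-5)]
      CR_equiv_if_omega_pair_meets_diagonal[OF assms(1-5) zw' diagonal]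
      property_star_if_omega_pair_separated[OF assms(1-3) qX zw q(2) separated]
    by blast
qed

end
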